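(* Let $S$ be a compact oriented surface with corner, $\Phi$ a flow on $S$, $C\subset\mathrm{Int}(S)$ a $\Phi$-invariant (piecewise smooth) simple closed curve, $\pi:\widetilde S\to S$ the cutting surgery along $C$, and $\widetilde\Phi$ the flow on $\widetilde S$ with $\pi\circ\widetilde\Phi=\Phi\circ(\mathrm{Id}_{\mathbb R}\times\pi)$. Let $x\in S\setminus C$ and $\widetilde x:=\pi^{-1}(x)$. Then $\pi(\omega(\widetilde x))=\omega(x)$, where $\omega(\widetilde x)$ is taken with respect to $\widetilde\Phi$ and $\omega(x)$ with respect to $\Phi$.
   Context: Cutting surgery: with a collar $C\times(-\epsilon,\epsilon)\subset\mathrm{Int}(S)$, $\widetilde S=(S\setminus C)\sqcup C_1\sqcup C_2$, $C_1,C_2$ copies of $C$ attached as the boundaries of $C\times(-\epsilon,0)$ and $C\times(0,\epsilon)$; $\pi$ is the identity on $S\setminus C$ and identifies each $C_i$ with $C$. The $\omega$-limit set of $x$ is the set of limits $\lim_n\Phi(t_n,x)$ over sequences $t_n\to\infty$. *)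

theory Defs
  imports "HOL-Analysis.Analysis"
begin

definition is_flow :: "'a::topological_space set \<Rightarrow> (real \<Rightarrow> 'a \<Rightarrow> 'a) \<Rightarrow> bool" where
  "is_flow X \<Phi> \<longleftrightarrow>
     continuous_on (UNIV \<times> X) (\<lambda>(t, x). \<Phi> t x) \<and>
     (\<forall>t. \<forall>x\<in>X. \<Phi> t x \<in> X) \<and>
     (\<forall>x\<in>X. \<Phi> 0 x = x) \<and>
     (\<forall>s t. \<forall>x\<in>X. \<Phi> (s + t) x = \<Phi> s (\<Phi> t x))"

definition omega_limit :: "(real \<Rightarrow> 'a::topological_space \<Rightarrow> 'a) \<Rightarrow> 'a \<Rightarrow> 'a set" where
  "omega_limit \<Phi> x = {y. \<exists>t::nat \<Rightarrow> real. filterlim t at_top sequentially \<and>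
                               ((\<lambda>n. \<Phi> (t n) x) \<longlonglongrightarrow> y)}"

text \<open>C is a simple closed curve in S, contained in the interior of S in the sense that it
  has a two-sided collar C x (-e,e) which is an open subset of S.\<close>
definition collar :: "'a::real_normed_vector set \<Rightarrow> 'a set \<Rightarrow> real \<Rightarrow> ('a \<times> real \<Rightarrow> 'a) \<Rightarrow> bool" where
  "collar S C \<epsilon> h \<longleftrightarrow> 0 < \<epsilon> \<and>
     (\<exists>g::real \<Rightarrow> 'a. simple_path g \<and> pathfinish g = pathstart g \<and> path_image g = C) \<and>
     C \<subseteq> S \<and>
     openin (top_of_set S) (h ` (C \<times> {-\<epsilon><..<\<epsilon>})) \<and>
     (\<exists>k. homeomorphism (C \<times> {-\<epsilon><..<\<epsilon>}) (h ` (C \<times> {-\<epsilon><..<\<epsilon>})) h k) \<and>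
     (\<forall>c\<in>C. h (c, 0) = c)"

text \<open>Cutting surgery along C with respect to the collar h:
  St is the cut surface, pi the projection. pi is a homeomorphism from St minus pi^-1(C)
  onto S minus C, and pi^-1(C) consists of two copies C1, C2 of C attached as the boundaries
  of the two half-collars C x [0,e) and C x (-e,0].\<close>
definition cutting_surgery ::
  "'a::real_normed_vector set \<Rightarrow> 'a set \<Rightarrow> real \<Rightarrow> ('a \<times> real \<Rightarrow> 'a)
     \<Rightarrow> 'b::real_normed_vector set \<Rightarrow> ('b \<Rightarrow> 'a) \<Rightarrow> bool" where
  "cutting_surgery S C \<epsilon> h St \<pi> \<longleftrightarrow>
     compact St \<and> continuous_on St \<pi> \<and> \<pi> ` St = S \<and>
     (\<exists>\<pi>'. homeomorphism (St - \<pi> -` C) (S - C) \<pi> \<pi>') \<and>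
     (\<exists>h1 h2 :: 'a \<times> real \<Rightarrow> 'b.
        (\<exists>k1. homeomorphism (C \<times> {0..<\<epsilon>}) (h1 ` (C \<times> {0..<\<epsilon>})) h1 k1) \<and>
        (\<exists>k2. homeomorphism (C \<times> {0..<\<epsilon>}) (h2 ` (C \<times> {0..<\<epsilon>})) h2 k2) \<and>
        openin (top_of_set St) (h1 ` (C \<times> {0..<\<epsilon>})) \<and>
        openin (top_of_set St) (h2 ` (C \<times> {0..<\<epsilon>})) \<and>
        h1 ` (C \<times> {0..<\<epsilon>}) \<inter> h2 ` (C \<times> {0..<\<epsilon>}) = {} \<and>
        (\<forall>c\<in>C. \<forall>s\<in>{0..<\<epsilon>}. \<pi> (h1 (c, s)) = h (c, s) \<and> \<pi> (h2 (c, s)) = h (c, -s)) \<and>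
        St \<inter> \<pi> -` C = h1 ` (C \<times> {0}) \<union> h2 ` (C \<times> {0}))"

end

theory Submission
  imports Defs
begin

text \<open>Only one feature of the cutting surgery matters: the projection is a continuous
  semiconjugacy from the compact cut surface.
  Limits along the lifted orbit are pushed forward by continuity; conversely, any divergent
  time sequence has a subsequence along which the lifted orbit converges by compactness, and
  its limit projects to the given one by uniqueness of limits.\<close>

lemma omega_limit_subset_closed:
  fixes \<Psi> :: "real \<Rightarrow> 'b::metric_space \<Rightarrow> 'b"
  assumes "closed X" and "\<And>t. \<Psi> t y \<in> X"
  shows "omega_limit \<Psi> y \<subseteq> X"
proof
  fix w assume "w \<in> omega_limit \<Psi> y"
  then obtain t where "(\<lambda>n. \<Psi> (t n) y) \<longlonglongrightarrow> w"
    unfolding omega_limit_def by auto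
  then show "w \<in> X"
    by (rule closed_sequentially[OF assms(1) assms(2)])
qed

lemma image_omega_limit_subset:
  fixes \<Psi> :: "real \<Rightarrow> 'b::metric_space \<Rightarrow> 'b" and \<Phi> :: "real \<Rightarrow> 'a::topological_space \<Rightarrow> 'a"
  assumes cont: "continuous_on X \<pi>" and X: "closed X"
    and orbit: "\<And>t. \<Psi> t y \<in> X" and semiconj: "\<And>t. \<pi> (\<Psi> t y) = \<Phi> t (\<pi> y)"
  shows "\<pi> ` omega_limit \<Psi> y \<subseteq> omega_limit \<Phi> (\<pi> y)"
proof
  fix z assume "z \<in> \<pi> ` omega_limit \<Psi> y"
  then obtain w t where z: "z = \<pi> w" and w: "w \<in> omega_limit \<Psi> y"
    and t: "filterlim t at_top sequentially" and lim: "(\<lambda>n. \<Psi> (t n) y) \<longlonglongrightarrow> w"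
    unfolding omega_limit_def by auto
  have "w \<in> X"
    using omega_limit_subset_closed[of X \<Psi> y] X orbit w by blast
  then have "(\<lambda>n. \<pi> (\<Psi> (t n) y)) \<longlonglongrightarrow> \<pi> w"
    using continuous_on_tendsto_compose[OF cont lim] orbit by simp
  then show "z \<in> omega_limit \<Phi> (\<pi> y)"
    using t z semiconj unfolding omega_limit_def by auto
qed

lemma omega_limit_subset_image:
  fixes \<Psi> :: "real \<Rightarrow> 'b::metric_space \<Rightarrow> 'b" and \<Phi> :: "real \<Rightarrow> 'a::t2_space \<Rightarrow> 'a"
  assumes cont: "continuous_on X \<pi>" and X: "compact X"
    and orbit: "\<And>t. \<Psi> t y \<in> X" and semiconj: "\<And>t. \<pi> (\<Psi> t y) = \<Phi> t (\<pi> y)"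
  shows "omega_limit \<Phi> (\<pi> y) \<subseteq> \<pi> ` omega_limit \<Psi> y"
proof
  fix z assume "z \<in> omega_limit \<Phi> (\<pi> y)"
  then obtain t where t: "filterlim t at_top sequentially"
    and lim: "(\<lambda>n. \<Phi> (t n) (\<pi> y)) \<longlonglongrightarrow> z"
    unfolding omega_limit_def by auto
  obtain w r where w: "w \<in> X" and r: "strict_mono r"
    and lim_sub: "(\<lambda>n. \<Psi> (t (r n)) y) \<longlonglongrightarrow> w"
    using seq_compactE[OF compact_imp_seq_compact[OF X], of "\<lambda>n. \<Psi> (t n) y"] orbit
    by (auto simp: o_def)
  have t_sub: "filterlim (\<lambda>n. t (r n)) at_top sequentially"
    using filterlim_compose[OF t filterlim_subseq[OF r]] by (simp add: o_def)
  have "(\<lambda>n. \<Phi> (t (r n)) (\<pi> y)) \<longlonglongrightarrow> \<pi> w"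
    using continuous_on_tendsto_compose[OF cont lim_sub w] orbit semiconj by simp
  moreover have "(\<lambda>n. \<Phi> (t (r n)) (\<pi> y)) \<longlonglongrightarrow> z"
    using LIMSEQ_subseq_LIMSEQ[OF lim r] by (simp add: o_def)
  ultimately have "z = \<pi> w" using LIMSEQ_unique by blast
  moreover have "w \<in> omega_limit \<Psi> y"
    using t_sub lim_sub unfolding omega_limit_def by auto
  ultimately show "z \<in> \<pi> ` omega_limit \<Psi> y" by blast
qed

lemma image_omega_limit_semiconj:
  fixes \<Psi> :: "real \<Rightarrow> 'b::metric_space \<Rightarrow> 'b" and \<Phi> :: "real \<Rightarrow> 'a::t2_space \<Rightarrow> 'a"
  assumes "continuous_on X \<pi>" and "compact X"
    and "\<And>t. \<Psi> t y \<in> X" and "\<And>t. \<pi> (\<Psi> t y) = \<Phi> t (\<pi> y)"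
  shows "\<pi> ` omega_limit \<Psi> y = omega_limit \<Phi> (\<pi> y)"
proof (rule subset_antisym)
  show "\<pi> ` omega_limit \<Psi> y \<subseteq> omega_limit \<Phi> (\<pi> y)"
    by (rule image_omega_limit_subset) (use assms compact_imp_closed in auto)
  show "omega_limit \<Phi> (\<pi> y) \<subseteq> \<pi> ` omega_limit \<Psi> y"
    by (rule omega_limit_subset_image) (use assms in auto)
qed

theorem lemma2p6:
  fixes S :: "'a::euclidean_space set" and St :: "'b::euclidean_space set"
    and C :: "'a set" and \<epsilon> :: real and h :: "'a \<times> real \<Rightarrow> 'a"
    and \<pi> :: "'b \<Rightarrow> 'a"
    and \<Phi> :: "real \<Rightarrow> 'a \<Rightarrow> 'a" and \<Phi>t :: "real \<Rightarrow> 'b \<Rightarrow> 'b"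
    and x :: 'a and xt :: 'b
  assumes "compact S"
    and "is_flow S \<Phi>"
    and "collar S C \<epsilon> h"
    and "\<forall>t. \<forall>c\<in>C. \<Phi> t c \<in> C"
    and "cutting_surgery S C \<epsilon> h St \<pi>"
    and "is_flow St \<Phi>t"
    and "\<forall>t. \<forall>y\<in>St. \<pi> (\<Phi>t t y) = \<Phi> t (\<pi> y)"
    and "x \<in> S - C"
    and "xt \<in> St" and "\<pi> xt = x"
  shows "\<pi> ` omega_limit \<Phi>t xt = omega_limit \<Phi> x"
proof -
  have "continuous_on St \<pi>" and "compact St"
    using assms(5) unfolding cutting_surgery_def by auto
  moreover have "\<And>t. \<Phi>t t xt \<in> St"
    using assms(6,9) unfolding is_flow_def by auto
  moreover have "\<And>t. \<pi> (\<Phi>t t xt) = \<Phi> t (\<pi> xt)"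
    using assms(7,9) by auto
  ultimately have "\<pi> ` omega_limit \<Phi>t xt = omega_limit \<Phi> (\<pi> xt)"
    by (rule image_omega_limit_semiconj)
  then show ?thesis
    using assms(10) by simp
qed

end
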